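(* Let $l,n$ be positive integers, $\mathbf{x}_1,\dots,\mathbf{x}_l\in\mathbb{R}^n$, $y_1,\dots,y_l\in\mathbb{R}$, $a_1,\dots,a_l,b_1,\dots,b_l\in\mathbb{R}$. Let $\varphi:\mathbb{R}\to[0,\infty)$ be nonconstant, continuous and sublinear, with $\varphi^*=\iota_{[\alpha,\beta]}$, $\alpha<\beta$. For $C>0$ let $\mathbf w^*(C)$ be the optimal solution of $$\min_{\mathbf w\in\mathbb{R}^n}\tfrac12\|\mathbf w\|^2+C\sum_{i=1}^l\varphi\big(\mathbf w^T(a_i\mathbf x_i)+b_iy_i\big),$$ and let $\theta^*(C)$ be an optimal solution of the dual problem $\min_{\theta\in[\alpha,\beta]^l}\frac{C}{2}\|\mathbf Z^T\theta\|^2-\langle\bar{\mathbf y},\theta\rangle$, where $\mathbf Z\in\mathbb{R}^{l\times n}$ has $i$-th row $a_i\mathbf x_i^T$ and $\bar{\mathbf y}=(b_1y_1,\dots,b_ly_l)^T$. Let $0<C_1<\dots<C_{\mathcal K}$ and suppose $\mathbf w^*(C_k)$ is known for some integer $1\le k<\mathcal K$. If $$-\tfrac{C_k+C_{k+1}}{2C_k}\langle\mathbf w^*(C_k),a_i\mathbf x_i\rangle-\tfrac{C_{k+1}-C_k}{2C_k}\|\mathbf w^*(C_k)\|\,\|a_i\mathbf x_i\|>b_iy_i,$$ then $[\theta^*(C_{k+1})]_i=\alpha$, i.e., $i\in\mathcal R$ (at $C=C_{k+1}$). Similarly, if $$-\tfrac{C_k+C_{k+1}}{2C_k}\langle\mathbf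 w^*(C_k),a_i\mathbf x_i\rangle+\tfrac{C_{k+1}-C_k}{2C_k}\|\mathbf w^*(C_k)\|\,\|a_i\mathbf x_i\|<b_iy_i,$$ then $[\theta^*(C_{k+1})]_i=\beta$, i.e., $i\in\mathcal L$.
   Context: Sublinear means convex and $\varphi(tx)=t\varphi(x)$ for $t>0$; $\varphi^*(s)=\sup_t(st-\varphi(t))$; $\iota_{[\alpha,\beta]}$ is $0$ on $[\alpha,\beta]$ and $+\infty$ elsewhere. Primal and dual solutions satisfy $\mathbf w^*(C)=-C\mathbf Z^T\theta^*(C)$. At parameter $C$: $\mathcal R=\{i:-\langle\mathbf w^*(C),a_i\mathbf x_i\rangle>b_iy_i\}$, $\mathcal L=\{i:-\langle\mathbf w^*(C),a_i\mathbf x_i\rangle<b_iy_i\}$. *)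

theory Defs
  imports "HOL-Analysis.Analysis"
begin

definition sublinear :: "(real \<Rightarrow> real) \<Rightarrow> bool" where
  "sublinear \<phi> \<longleftrightarrow> convex_on UNIV \<phi> \<and> (\<forall>t>0. \<forall>x. \<phi> (t * x) = t * \<phi> x)"

definition fconj :: "(real \<Rightarrow> real) \<Rightarrow> real \<Rightarrow> ereal" where
  "fconj \<phi> s = (SUP t. ereal (s * t - \<phi> t))"

definition iota_interval :: "real \<Rightarrow> real \<Rightarrow> real \<Rightarrow> ereal" where
  "iota_interval \<alpha> \<beta> s = (if \<alpha> \<le> s \<and> s \<le> \<beta> then 0 else \<infinity>)"

definition primal_obj ::
  "(real \<Rightarrow> real) \<Rightarrow> ('l::finite \<Rightarrow> real) \<Rightarrow> ('l \<Rightarrow> real^'n) \<Rightarrow> ('l \<Rightarrow> real) \<Rightarrow> ('l \<Rightarrow> real)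
    \<Rightarrow> real \<Rightarrow> real^'n \<Rightarrow> real" where
  "primal_obj \<phi> a x b y C w =
     (1/2) * (norm w)^2 + C * (\<Sum>i\<in>UNIV. \<phi> (w \<bullet> (a i *\<^sub>R x i) + b i * y i))"

definition primal_opt ::
  "(real \<Rightarrow> real) \<Rightarrow> ('l::finite \<Rightarrow> real) \<Rightarrow> ('l \<Rightarrow> real^'n) \<Rightarrow> ('l \<Rightarrow> real) \<Rightarrow> ('l \<Rightarrow> real)
    \<Rightarrow> real \<Rightarrow> real^'n \<Rightarrow> bool" where
  "primal_opt \<phi> a x b y C w \<longleftrightarrow> (\<forall>v. primal_obj \<phi> a x b y C w \<le> primal_obj \<phi> a x b y C v)"

definition ZT :: "('l::finite \<Rightarrow> real) \<Rightarrow> ('l \<Rightarrow> real^'n) \<Rightarrow> ('l \<Rightarrow> real) \<Rightarrow> real^'n" where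
  "ZT a x \<theta> = (\<Sum>i\<in>UNIV. \<theta> i *\<^sub>R (a i *\<^sub>R x i))"

definition dual_obj ::
  "('l::finite \<Rightarrow> real) \<Rightarrow> ('l \<Rightarrow> real^'n) \<Rightarrow> ('l \<Rightarrow> real) \<Rightarrow> ('l \<Rightarrow> real)
    \<Rightarrow> real \<Rightarrow> ('l \<Rightarrow> real) \<Rightarrow> real" where
  "dual_obj a x b y C \<theta> = C / 2 * (norm (ZT a x \<theta>))^2 - (\<Sum>i\<in>UNIV. b i * y i * \<theta> i)"

definition dual_opt ::
  "real \<Rightarrow> real \<Rightarrow> ('l::finite \<Rightarrow> real) \<Rightarrow> ('l \<Rightarrow> real^'n) \<Rightarrow> ('l \<Rightarrow> real) \<Rightarrow> ('l \<Rightarrow> real)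
    \<Rightarrow> real \<Rightarrow> ('l \<Rightarrow> real) \<Rightarrow> bool" where
  "dual_opt \<alpha> \<beta> a x b y C \<theta> \<longleftrightarrow>
     (\<forall>i. \<alpha> \<le> \<theta> i \<and> \<theta> i \<le> \<beta>) \<and>
     (\<forall>\<eta>. (\<forall>i. \<alpha> \<le> \<eta> i \<and> \<eta> i \<le> \<beta>) \<longrightarrow> dual_obj a x b y C \<theta> \<le> dual_obj a x b y C \<eta>)"

definition idx_R :: "('l \<Rightarrow> real) \<Rightarrow> ('l \<Rightarrow> real^'n) \<Rightarrow> ('l \<Rightarrow> real) \<Rightarrow> ('l \<Rightarrow> real) \<Rightarrow> real^'n \<Rightarrow> 'l set" where
  "idx_R a x b y w = {i. - (w \<bullet> (a i *\<^sub>R x i)) > b i * y i}"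

definition idx_L :: "('l \<Rightarrow> real) \<Rightarrow> ('l \<Rightarrow> real^'n) \<Rightarrow> ('l \<Rightarrow> real) \<Rightarrow> ('l \<Rightarrow> real) \<Rightarrow> real^'n \<Rightarrow> 'l set" where
  "idx_L a x b y w = {i. - (w \<bullet> (a i *\<^sub>R x i)) < b i * y i}"

end

theory Submission
  imports Defs
begin

text \<open>
  A sublinear \<open>\<phi>\<close> with \<open>\<phi>\<^sup>* = \<iota>\<^bsub>[\<alpha>,\<beta>]\<^esub>\<close> is \<open>t \<mapsto> max (\<alpha> t) (\<beta> t)\<close>. Hence optimality of
  \<open>\<theta>\<close> for the box-constrained dual forces \<open>\<theta>\<^sub>i = \<beta>\<close> or \<open>\<theta>\<^sub>i = \<alpha>\<close> according to the sign of the
  margin \<open>\<langle>w, a\<^sub>i x\<^sub>i\<rangle> + b\<^sub>i y\<^sub>i\<close> at \<open>w = -C Z\<^sup>T\<theta>\<close>, which makes \<open>w\<close> the primal optimum.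
  Comparing the variational inequalities of the duals at \<open>C\<^sub>k\<close> and \<open>C\<^sub>k\<^sub>+\<^sub>1\<close> gives
  \<open>\<langle>w\<^sub>1 - w\<^sub>2, w\<^sub>1/C\<^sub>k - w\<^sub>2/C\<^sub>k\<^sub>+\<^sub>1\<rangle> \<le> 0\<close>, i.e. \<open>w\<^sub>2\<close> lies in the ball of radius
  \<open>(C\<^sub>k\<^sub>+\<^sub>1 - C\<^sub>k)/(2C\<^sub>k) \<parallel>w\<^sub>1\<parallel>\<close> around \<open>(C\<^sub>k + C\<^sub>k\<^sub>+\<^sub>1)/(2C\<^sub>k) w\<^sub>1\<close>. Cauchy-Schwarz then bounds the
  margin of every sample at \<open>C\<^sub>k\<^sub>+\<^sub>1\<close>, and the hypotheses fix its sign.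
\<close>

lemma positively_homogeneous_real_eq:
  fixes \<phi> :: "real \<Rightarrow> real"
  assumes hom: "\<forall>t>0. \<forall>u. \<phi> (t * u) = t * \<phi> u"
  shows "\<phi> t = (if t \<ge> 0 then t * \<phi> 1 else - t * \<phi> (-1))"
proof -
  have "\<phi> 0 = 0" using hom[rule_format, of 2 0] by simp
  moreover have "\<phi> t = t * \<phi> 1" if "t > 0" using hom[rule_format, OF that, of 1] by simp
  moreover have "\<phi> t = - t * \<phi> (-1)" if "t < 0"
    using hom[rule_format, of "- t" "-1"] that by simp
  ultimately show ?thesis by (cases t "0::real" rule: linorder_cases) auto
qed

lemma fconj_le_zero_iff: "fconj \<phi> s \<le> 0 \<longleftrightarrow> (\<forall>t. s * t \<le> \<phi> t)"
  unfolding fconj_def by (simp add: SUP_le_iff)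

lemma positively_homogeneous_minorant_slopes:
  fixes \<phi> :: "real \<Rightarrow> real"
  assumes hom: "\<forall>t>0. \<forall>u. \<phi> (t * u) = t * \<phi> u"
  shows "(\<forall>t. s * t \<le> \<phi> t) \<longleftrightarrow> - \<phi> (-1) \<le> s \<and> s \<le> \<phi> 1"
proof
  assume "\<forall>t. s * t \<le> \<phi> t"
  then show "- \<phi> (-1) \<le> s \<and> s \<le> \<phi> 1"
    by (metis minus_le_iff mult.right_neutral mult_minus1_right)
next
  assume s: "- \<phi> (-1) \<le> s \<and> s \<le> \<phi> 1"
  show "\<forall>t. s * t \<le> \<phi> t"
  proof
    fix t :: real
    have "t * s \<le> t * \<phi> 1" if "t \<ge> 0" using that s by (intro mult_left_mono) auto
    moreover have "(- t) * (- s) \<le> (- t) * \<phi> (-1)" if "t < 0" using that s by (intro mult_left_mono) auto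
    ultimately show "s * t \<le> \<phi> t"
      by (subst positively_homogeneous_real_eq[OF hom]) (auto simp: mult.commute)
  qed
qed

lemma sublinear_conj_indicator_eq_max:
  fixes \<phi> :: "real \<Rightarrow> real"
  assumes "sublinear \<phi>" and "\<forall>s. fconj \<phi> s = iota_interval \<alpha> \<beta> s" and "\<alpha> < \<beta>"
  shows "\<phi> t = max (\<alpha> * t) (\<beta> * t)"
proof -
  have hom: "\<forall>t>0. \<forall>u. \<phi> (t * u) = t * \<phi> u" using assms(1) by (simp add: sublinear_def)
  have "{\<alpha>..\<beta>} = {s. \<forall>t. s * t \<le> \<phi> t}"
    using assms(2) by (auto simp: fconj_le_zero_iff[symmetric] iota_interval_def)
  also have "\<dots> = {- \<phi> (-1)..\<phi> 1}"
    using positively_homogeneous_minorant_slopes[OF hom] by auto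
  finally have "\<alpha> = - \<phi> (-1)" "\<beta> = \<phi> 1"
    using assms(3) by simp_all
  then show ?thesis
    using assms(3) mult_right_mono[of \<alpha> \<beta> t] mult_right_mono_neg[of \<alpha> \<beta> t]
    by (subst positively_homogeneous_real_eq[OF hom]) (auto simp: max_def mult.commute)
qed

lemma nonneg_slope_if_nonneg_quadratic_at_right:
  fixes g A d :: real
  assumes "d > 0" and "\<forall>e. 0 < e \<and> e < d \<longrightarrow> 0 \<le> e * g + A * e\<^sup>2"
  shows "g \<ge> 0"
proof (rule tendsto_lowerbound[OF _ _ trivial_limit_at_right_real])
  show "((\<lambda>e. g + A * e) \<longlongrightarrow> g) (at_right 0)"
    by (auto intro!: tendsto_eq_intros)
  have "0 \<le> g + A * e" if "0 < e" "e < d" for e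
  proof -
    have "0 \<le> e * g + A * e\<^sup>2" using assms(2) that by blast
    also have "\<dots> = e * (g + A * e)" by (simp add: power2_eq_square algebra_simps)
    finally have "0 \<le> e * (g + A * e)" .
    then show ?thesis using that by (simp add: zero_le_mult_iff)
  qed
  then show "\<forall>\<^sub>F e in at_right 0. 0 \<le> g + A * e"
    using eventually_at_right_real[OF assms(1)] by (auto elim!: eventually_mono)
qed

lemma ZT_fun_upd: "ZT a x (\<theta>(i := \<theta> i + e)) = ZT a x \<theta> + e *\<^sub>R (a i *\<^sub>R x i)"
proof -
  have "(\<theta>(i := \<theta> i + e)) j *\<^sub>R (a j *\<^sub>R x j)
      = \<theta> j *\<^sub>R (a j *\<^sub>R x j) + (if j = i then e *\<^sub>R (a i *\<^sub>R x i) else 0)" for j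
    by (simp add: scaleR_add_left distrib_right)
  then show ?thesis unfolding ZT_def by (simp add: sum.distrib)
qed

lemma sum_mult_fun_upd:
  "(\<Sum>j\<in>(UNIV :: 'l::finite set). c j * (\<theta>(i := \<theta> i + e)) j) = (\<Sum>j\<in>UNIV. c j * \<theta> j) + c i * (e::real)"
proof -
  have "c j * (\<theta>(i := \<theta> i + e)) j = c j * \<theta> j + (if j = i then c i * e else 0)" for j
    by (simp add: distrib_left)
  then show ?thesis by (simp add: sum.distrib)
qed

lemma dual_obj_fun_upd:
  "dual_obj a x b y C (\<theta>(i := \<theta> i + e)) = dual_obj a x b y C \<theta>
     + e * (C * (ZT a x \<theta> \<bullet> (a i *\<^sub>R x i)) - b i * y i) + C / 2 * (norm (a i *\<^sub>R x i))\<^sup>2 * e\<^sup>2"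
proof -
  have "x i \<bullet> ZT a x \<theta> = ZT a x \<theta> \<bullet> x i" by (rule inner_commute)
  then show ?thesis
    unfolding dual_obj_def ZT_fun_upd sum_mult_fun_upd[of "\<lambda>j. b j * y j"] power2_norm_eq_inner
    by (simp add: inner_add_left inner_add_right algebra_simps power2_eq_square)
qed

lemma dual_opt_coordinate:
  fixes i :: "'l::finite"
  assumes opt: "dual_opt \<alpha> \<beta> a x b y C \<theta>"
  defines "u \<equiv> (- C *\<^sub>R ZT a x \<theta>) \<bullet> (a i *\<^sub>R x i) + b i * y i"
  shows "(u > 0 \<longrightarrow> \<theta> i = \<beta>) \<and> (u < 0 \<longrightarrow> \<theta> i = \<alpha>)"
proof -
  define A where "A = C / 2 * (norm (a i *\<^sub>R x i))\<^sup>2"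
  have box: "\<forall>j. \<alpha> \<le> \<theta> j \<and> \<theta> j \<le> \<beta>" using opt by (simp add: dual_opt_def)
  then have box_i: "\<alpha> \<le> \<theta> i" "\<theta> i \<le> \<beta>" by auto
  have perturb: "0 \<le> e * (- u) + A * e\<^sup>2" if "\<alpha> \<le> \<theta> i + e" "\<theta> i + e \<le> \<beta>" for e
  proof -
    have "\<forall>j. \<alpha> \<le> (\<theta>(i := \<theta> i + e)) j \<and> (\<theta>(i := \<theta> i + e)) j \<le> \<beta>" using box that by auto
    then have "dual_obj a x b y C \<theta> \<le> dual_obj a x b y C (\<theta>(i := \<theta> i + e))"
      using opt by (simp add: dual_opt_def)
    then show ?thesis unfolding dual_obj_fun_upd u_def A_def by (simp add: algebra_simps)
  qed
  have "- u \<ge> 0" if "\<theta> i < \<beta>"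
  proof (rule nonneg_slope_if_nonneg_quadratic_at_right)
    show "\<forall>e. 0 < e \<and> e < \<beta> - \<theta> i \<longrightarrow> 0 \<le> e * - u + A * e\<^sup>2"
      by (intro allI impI perturb) (use box_i in auto)
  qed (use that in simp)
  moreover have "u \<ge> 0" if "\<alpha> < \<theta> i"
  proof (rule nonneg_slope_if_nonneg_quadratic_at_right)
    show "\<forall>e. 0 < e \<and> e < \<theta> i - \<alpha> \<longrightarrow> 0 \<le> e * u + A * e\<^sup>2"
      using perturb[of "- _"] box_i by fastforce
  qed (use that in simp)
  ultimately show ?thesis using box_i by force
qed

lemma max_mult_eq_if_kkt:
  fixes \<alpha> \<beta> \<theta> u :: real
  assumes "\<alpha> \<le> \<theta>" "\<theta> \<le> \<beta>" "u > 0 \<longrightarrow> \<theta> = \<beta>" "u < 0 \<longrightarrow> \<theta> = \<alpha>"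
  shows "max (\<alpha> * u) (\<beta> * u) = \<theta> * u"
  using assms mult_right_mono[of \<alpha> \<beta> u] mult_right_mono_neg[of \<alpha> \<beta> u]
  by (cases u "0::real" rule: linorder_cases) (auto simp: max_def)

lemma mult_le_max_mult:
  fixes \<alpha> \<beta> \<theta> u :: real
  assumes "\<alpha> \<le> \<theta>" "\<theta> \<le> \<beta>"
  shows "\<theta> * u \<le> max (\<alpha> * u) (\<beta> * u)"
  using assms mult_right_mono[of \<alpha> \<theta> u] mult_right_mono[of \<theta> \<beta> u]
    mult_right_mono_neg[of \<alpha> \<theta> u] mult_right_mono_neg[of \<theta> \<beta> u]
  by (cases "u \<ge> 0") auto

lemma dual_opt_complementary_slackness:
  fixes i :: "'l::finite"
  assumes "dual_opt \<alpha> \<beta> a x b y C \<theta>"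
  defines "u \<equiv> (- C *\<^sub>R ZT a x \<theta>) \<bullet> (a i *\<^sub>R x i) + b i * y i"
  shows "max (\<alpha> * u) (\<beta> * u) = \<theta> i * u"
  using assms dual_opt_coordinate[OF assms(1), of i]
  by (intro max_mult_eq_if_kkt) (auto simp: dual_opt_def)

lemma sum_mult_affine_eq_ZT:
  "(\<Sum>j\<in>UNIV. \<theta> j * (v \<bullet> (a j *\<^sub>R x j) + b j * y j)) = v \<bullet> ZT a x \<theta> + (\<Sum>j\<in>UNIV. b j * y j * \<theta> j)"
  unfolding ZT_def inner_sum_right inner_scaleR_right by (simp add: sum.distrib algebra_simps)

lemma dual_opt_variational_ineq:
  assumes opt: "dual_opt \<alpha> \<beta> a x b y C \<theta>" and box: "\<forall>j. \<alpha> \<le> \<theta>' j \<and> \<theta>' j \<le> \<beta>"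
  defines "w \<equiv> - C *\<^sub>R ZT a x \<theta>"
  shows "w \<bullet> ZT a x \<theta>' + (\<Sum>j\<in>UNIV. b j * y j * \<theta>' j) \<le> w \<bullet> ZT a x \<theta> + (\<Sum>j\<in>UNIV. b j * y j * \<theta> j)"
proof -
  have "(\<Sum>j\<in>UNIV. \<theta>' j * (w \<bullet> (a j *\<^sub>R x j) + b j * y j))
      \<le> (\<Sum>j\<in>UNIV. \<theta> j * (w \<bullet> (a j *\<^sub>R x j) + b j * y j))"
  proof (rule sum_mono)
    fix j
    show "\<theta>' j * (w \<bullet> (a j *\<^sub>R x j) + b j * y j) \<le> \<theta> j * (w \<bullet> (a j *\<^sub>R x j) + b j * y j)"
      using mult_le_max_mult box dual_opt_complementary_slackness[OF opt, of j]
      unfolding w_def by metis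
  qed
  then show ?thesis unfolding sum_mult_affine_eq_ZT .
qed

lemma half_norm_sq_add_inner:
  fixes v \<eta> :: "'a::real_inner"
  shows "(1/2) * (norm v)\<^sup>2 + C * (v \<bullet> \<eta>) = (1/2) * (norm (v + C *\<^sub>R \<eta>))\<^sup>2 - C\<^sup>2 / 2 * (norm \<eta>)\<^sup>2"
  unfolding power2_norm_eq_inner
  by (simp add: inner_add_left inner_add_right inner_commute[of \<eta> v] power2_eq_square algebra_simps)

lemma primal_opt_eq_dual:
  fixes \<phi> :: "real \<Rightarrow> real"
  assumes \<phi>: "\<And>t. \<phi> t = max (\<alpha> * t) (\<beta> * t)"
    and dopt: "dual_opt \<alpha> \<beta> a x b y C \<theta>" and C: "C > 0"
    and popt: "primal_opt \<phi> a x b y C w"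
  shows "w = - C *\<^sub>R ZT a x \<theta>"
proof -
  define \<eta> where "\<eta> = ZT a x \<theta>"
  define S where "S = (\<Sum>j\<in>UNIV. b j * y j * \<theta> j)"
  define F where "F v = (1/2) * (norm v)\<^sup>2 + C * (v \<bullet> \<eta> + S)" for v
  have box: "\<forall>j. \<alpha> \<le> \<theta> j \<and> \<theta> j \<le> \<beta>" using dopt by (simp add: dual_opt_def)
  have lower: "F v \<le> primal_obj \<phi> a x b y C v" for v
  proof -
    have "(\<Sum>j\<in>UNIV. \<theta> j * (v \<bullet> (a j *\<^sub>R x j) + b j * y j))
        \<le> (\<Sum>j\<in>UNIV. \<phi> (v \<bullet> (a j *\<^sub>R x j) + b j * y j))"
      unfolding \<phi> by (intro sum_mono mult_le_max_mult) (use box in auto)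
    then show ?thesis
      using C unfolding F_def primal_obj_def sum_mult_affine_eq_ZT \<eta>_def S_def by simp
  qed
  have attained: "primal_obj \<phi> a x b y C (- C *\<^sub>R \<eta>) = F (- C *\<^sub>R \<eta>)"
    unfolding primal_obj_def F_def \<phi> \<eta>_def dual_opt_complementary_slackness[OF dopt]
      sum_mult_affine_eq_ZT S_def ..
  have F_min: "F v = F (- C *\<^sub>R \<eta>) + (1/2) * (norm (v + C *\<^sub>R \<eta>))\<^sup>2" for v
  proof -
    have "F (- C *\<^sub>R \<eta>) = - C\<^sup>2 / 2 * (norm \<eta>)\<^sup>2 + C * S"
      by (simp add: F_def power_mult_distrib power2_abs flip: power2_norm_eq_inner)
        (simp add: algebra_simps power2_eq_square)
    then show ?thesis using half_norm_sq_add_inner[of v C \<eta>] by (simp add: F_def distrib_left)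
  qed
  have "F (- C *\<^sub>R \<eta>) = primal_obj \<phi> a x b y C (- C *\<^sub>R \<eta>)" by (rule attained[symmetric])
  also have "\<dots> \<ge> primal_obj \<phi> a x b y C w" using popt by (simp add: primal_opt_def)
  also have "primal_obj \<phi> a x b y C w \<ge> F w" by (rule lower)
  finally have "norm (w + C *\<^sub>R \<eta>) = 0" using F_min[of w] by simp
  then show ?thesis unfolding \<eta>_def by (metis eq_neg_iff_add_eq_0 norm_eq_zero scaleR_minus_left)
qed

lemma dual_opt_pair_monotone:
  assumes opt1: "dual_opt \<alpha> \<beta> a x b y C1 \<theta>1" and opt2: "dual_opt \<alpha> \<beta> a x b y C2 \<theta>2"
    and "C1 > 0" "C2 > 0"
  defines "w1 \<equiv> - C1 *\<^sub>R ZT a x \<theta>1" and "w2 \<equiv> - C2 *\<^sub>R ZT a x \<theta>2"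
  shows "(w1 - w2) \<bullet> ((1 / C1) *\<^sub>R w1 - (1 / C2) *\<^sub>R w2) \<le> 0"
proof -
  define S1 where "S1 = (\<Sum>j\<in>UNIV. b j * y j * \<theta>1 j)"
  define S2 where "S2 = (\<Sum>j\<in>UNIV. b j * y j * \<theta>2 j)"
  have "ZT a x \<theta>1 = - ((1 / C1) *\<^sub>R w1)" "ZT a x \<theta>2 = - ((1 / C2) *\<^sub>R w2)"
    using assms(3,4) by (simp_all add: w1_def w2_def)
  moreover have "w1 \<bullet> ZT a x \<theta>2 + S2 \<le> w1 \<bullet> ZT a x \<theta>1 + S1"
    using dual_opt_variational_ineq[OF opt1] opt2 unfolding w1_def S1_def S2_def dual_opt_def by blast
  moreover have "w2 \<bullet> ZT a x \<theta>1 + S1 \<le> w2 \<bullet> ZT a x \<theta>2 + S2"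
    using dual_opt_variational_ineq[OF opt2] opt1 unfolding w2_def S1_def S2_def dual_opt_def by blast
  ultimately have "w1 \<bullet> ((1 / C2) *\<^sub>R w2) - w1 \<bullet> ((1 / C1) *\<^sub>R w1)
      + w2 \<bullet> ((1 / C1) *\<^sub>R w1) - w2 \<bullet> ((1 / C2) *\<^sub>R w2) \<ge> 0"
    by (simp only: inner_minus_right)
  then show ?thesis
    by (simp add: inner_diff_left inner_diff_right inner_commute[of w2 w1] diff_divide_distrib)
qed

lemma norm_diff_le_of_inner_monotone:
  fixes w1 w2 :: "'a::real_inner" and C1 C2 :: real
  assumes "C1 > 0" "C2 > 0" and mono: "(w1 - w2) \<bullet> ((1 / C1) *\<^sub>R w1 - (1 / C2) *\<^sub>R w2) \<le> 0"
  shows "norm (w2 - ((C1 + C2) / (2 * C1)) *\<^sub>R w1) \<le> \<bar>C2 - C1\<bar> / (2 * C1) * norm w1"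
proof (rule power2_le_imp_le)
  define \<mu> where "\<mu> = (C1 + C2) / (2 * C1)"
  define r where "r = \<bar>C2 - C1\<bar> / (2 * C1)"
  define p where "p = w1 \<bullet> w1"
  define q where "q = w1 \<bullet> w2"
  define t where "t = w2 \<bullet> w2"
  have \<mu>_r: "\<mu>\<^sup>2 = r\<^sup>2 + C2 / C1" "2 * \<mu> = 1 + C2 / C1"
    using assms(1) by (simp_all add: \<mu>_def r_def power_divide power2_abs field_simps power2_eq_square)
  have "(norm (w2 - \<mu> *\<^sub>R w1))\<^sup>2 = t - 2 * \<mu> * q + \<mu>\<^sup>2 * p"
    unfolding power2_norm_eq_inner
    by (simp add: inner_diff_left inner_diff_right inner_commute[of w2 w1]
        p_def q_def t_def power2_eq_square algebra_simps)
  also have "\<dots> = r\<^sup>2 * p + C2 * (p / C1 - q / C2 - q / C1 + t / C2)"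
    unfolding \<mu>_r(1) mult.assoc[of 2, symmetric] \<mu>_r(2) using assms(2) by (simp add: field_simps)
  also have "p / C1 - q / C2 - q / C1 + t / C2 = (w1 - w2) \<bullet> ((1 / C1) *\<^sub>R w1 - (1 / C2) *\<^sub>R w2)"
    by (simp add: inner_diff_left inner_diff_right inner_commute[of w2 w1] diff_divide_distrib
        p_def q_def t_def)
  also have "r\<^sup>2 * p = (r * norm w1)\<^sup>2" by (simp add: p_def power_mult_distrib power2_norm_eq_inner)
  finally show "(norm (w2 - ((C1 + C2) / (2 * C1)) *\<^sub>R w1))\<^sup>2 \<le> (\<bar>C2 - C1\<bar> / (2 * C1) * norm w1)\<^sup>2"
    using assms(2) mono unfolding \<mu>_def r_def by (simp add: mult_nonneg_nonpos)
  show "0 \<le> \<bar>C2 - C1\<bar> / (2 * C1) * norm w1" using assms(1) by simp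
qed

lemma inner_bounds_of_norm_diff_le:
  fixes u v z :: "'a::real_inner"
  assumes "norm (v - u) \<le> \<rho>"
  shows "u \<bullet> z - \<rho> * norm z \<le> v \<bullet> z" and "v \<bullet> z \<le> u \<bullet> z + \<rho> * norm z"
proof -
  have "\<bar>(v - u) \<bullet> z\<bar> \<le> \<rho> * norm z"
    using Cauchy_Schwarz_ineq2[of "v - u" z] assms mult_right_mono[OF assms norm_ge_zero[of z]] by linarith
  then show "u \<bullet> z - \<rho> * norm z \<le> v \<bullet> z" "v \<bullet> z \<le> u \<bullet> z + \<rho> * norm z"
    by (auto simp: inner_diff_left abs_le_iff)
qed

lemma incr_segment_ge_first:
  fixes f :: "nat \<Rightarrow> 'a::preorder"
  assumes "\<forall>j. 1 \<le> j \<and> j < K \<longrightarrow> f j < f (Suc j)" and "1 \<le> k" "k \<le> K"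
  shows "f 1 \<le> f k"
  using assms(2,3)
proof (induction k rule: dec_induct)
  case (step n)
  then show ?case using assms(1) by (meson less_imp_le order_trans Suc_le_lessD)
qed simp

theorem corollary2:
  fixes \<phi> :: "real \<Rightarrow> real" and \<alpha> \<beta> :: real
    and x :: "'l::finite \<Rightarrow> real^'n" and y a b :: "'l \<Rightarrow> real"
    and W :: "real \<Rightarrow> real^'n" and \<Theta> :: "real \<Rightarrow> 'l \<Rightarrow> real"
    and Cs :: "nat \<Rightarrow> real" and K k :: nat and i :: 'l
  assumes nonneg: "\<forall>t. \<phi> t \<ge> 0"
    and nonconst: "\<exists>s t. \<phi> s \<noteq> \<phi> t"
    and cont: "continuous_on UNIV \<phi>"
    and subl: "sublinear \<phi>"
    and conj: "\<forall>s. fconj \<phi> s = iota_interval \<alpha> \<beta> s"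
    and ab: "\<alpha> < \<beta>"
    and W_opt: "\<forall>C>0. primal_opt \<phi> a x b y C (W C)"
    and Theta_opt: "\<forall>C>0. dual_opt \<alpha> \<beta> a x b y C (\<Theta> C)"
    and C_pos: "0 < Cs 1"
    and C_incr: "\<forall>j. 1 \<le> j \<and> j < K \<longrightarrow> Cs j < Cs (Suc j)"
    and k: "1 \<le> k" "k < K"
  shows
    "(- ((Cs k + Cs (Suc k)) / (2 * Cs k)) * (W (Cs k) \<bullet> (a i *\<^sub>R x i))
        - ((Cs (Suc k) - Cs k) / (2 * Cs k)) * norm (W (Cs k)) * norm (a i *\<^sub>R x i) > b i * y i
      \<longrightarrow> \<Theta> (Cs (Suc k)) i = \<alpha> \<and> i \<in> idx_R a x b y (W (Cs (Suc k))))
   \<and> (- ((Cs k + Cs (Suc k)) / (2 * Cs k)) * (W (Cs k) \<bullet> (a i *\<^sub>R x i))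
        + ((Cs (Suc k) - Cs k) / (2 * Cs k)) * norm (W (Cs k)) * norm (a i *\<^sub>R x i) < b i * y i
      \<longrightarrow> \<Theta> (Cs (Suc k)) i = \<beta> \<and> i \<in> idx_L a x b y (W (Cs (Suc k))))"
proof -
  have \<phi>: "\<And>t. \<phi> t = max (\<alpha> * t) (\<beta> * t)"
    by (rule sublinear_conj_indicator_eq_max[OF subl conj ab])
  define C1 C2 where "C1 = Cs k" and "C2 = Cs (Suc k)"
  have "C1 > 0" using incr_segment_ge_first[OF C_incr k(1)] k C_pos unfolding C1_def by force
  moreover have "C1 < C2" using C_incr k unfolding C1_def C2_def by auto
  ultimately have C2: "C2 > 0" and dist: "\<bar>C2 - C1\<bar> = C2 - C1" by auto
  have opt1: "dual_opt \<alpha> \<beta> a x b y C1 (\<Theta> C1)" and opt2: "dual_opt \<alpha> \<beta> a x b y C2 (\<Theta> C2)"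
    using Theta_opt \<open>C1 > 0\<close> C2 by auto
  have W1: "W C1 = - C1 *\<^sub>R ZT a x (\<Theta> C1)" and W2: "W C2 = - C2 *\<^sub>R ZT a x (\<Theta> C2)"
    using primal_opt_eq_dual[OF \<phi>] opt1 opt2 W_opt \<open>C1 > 0\<close> C2 by blast+
  have "norm (W C2 - ((C1 + C2) / (2 * C1)) *\<^sub>R W C1) \<le> (C2 - C1) / (2 * C1) * norm (W C1)"
    using norm_diff_le_of_inner_monotone[OF \<open>C1 > 0\<close> C2 dual_opt_pair_monotone[OF opt1 opt2 \<open>C1 > 0\<close> C2]]
    unfolding W1 W2 dist .
  note bounds = inner_bounds_of_norm_diff_le[OF this, of "a i *\<^sub>R x i"]
  have kkt: "(W C2 \<bullet> (a i *\<^sub>R x i) + b i * y i > 0 \<longrightarrow> \<Theta> C2 i = \<beta>)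
      \<and> (W C2 \<bullet> (a i *\<^sub>R x i) + b i * y i < 0 \<longrightarrow> \<Theta> C2 i = \<alpha>)"
    using dual_opt_coordinate[OF opt2, of i] unfolding W2 .
  show ?thesis
    using bounds kkt unfolding C1_def C2_def idx_R_def idx_L_def inner_scaleR_left
    by (auto simp: algebra_simps)
qed

end
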